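(* Let $\phi\colon[0,+\infty)\to(0,+\infty)$ satisfy $\int_{\mathbb{R}}\min\{1,|x|\}\,\phi(|x|)\,dx<+\infty$ and suppose there is an increasing function $\psi\colon[0,+\infty)\to[0,+\infty)$ such that $$\inf_{t>0}\frac{R^2\phi(Rt)-r^2\phi(rt)}{\phi(t)}\ge\psi(R)-\psi(r)\quad\text{for all }R\ge r\ge0.$$ If $A,B\subset\mathbb{R}$ are segments with $|A|\le|B|$, then, setting $c_\phi=P_\phi((0,1))$, $$P_\phi(A)+c_\phi\big(\psi(|B|)-\psi(|A|)\big)\le P_\phi(B).$$
   Context: For measurable $E\subset\mathbb{R}$, $P_\phi(E)=\frac12\int_{\mathbb{R}}\int_{\mathbb{R}}|\chi_E(x)-\chi_E(y)|\,\phi(|x-y|)\,dx\,dy=\int_E\int_{E^c}\phi(|x-y|)\,dx\,dy$. A segment is a bounded interval of positive length, and $|A|$ denotes its length. *)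

theory Defs
  imports "HOL-Analysis.Analysis"
begin

definition nl_perimeter :: "(real \<Rightarrow> real) \<Rightarrow> real set \<Rightarrow> ennreal" where
  "nl_perimeter phi E =
     (\<integral>\<^sup>+ x. indicator E x * (\<integral>\<^sup>+ y. indicator (- E) y * ennreal (phi \<bar>x - y\<bar>) \<partial>lborel) \<partial>lborel)"

definition is_segment :: "real set \<Rightarrow> bool" where
  "is_segment A \<longleftrightarrow> (\<exists>a b. a < b \<and>
     (A = {a<..<b} \<or> A = {a..b} \<or> A = {a<..b} \<or> A = {a..<b}))"

end

theory Submission imports Defs begin

text \<open>For an interval \<open>I\<close> of length \<open>L\<close>, Fubini and the substitution \<open>y = x + h\<close> give
  \<open>P\<^sub>\<phi>(I) = \<integral> \<phi>(|h|) |I \<setminus> (I - h)| dh = \<integral> \<phi>(|h|) min(|h|, L) dh\<close>, and rescaling \<open>h = L u\<close>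
  turns this into \<open>\<integral> L\<^sup>2 \<phi>(L|u|) min(|u|, 1) du\<close>. The hypothesis on \<open>\<psi>\<close> says exactly that this
  integrand grows in \<open>L\<close> by at least \<open>(\<psi>(R) - \<psi>(r)) \<phi>(|u|) min(|u|, 1)\<close>, which integrates to
  \<open>c\<^sub>\<phi> (\<psi>(R) - \<psi>(r))\<close>. Segments are a.e. equal to open intervals, so nothing else matters.\<close>

lemma borel_measurable_abs_compose:
  assumes "(\<lambda>x. phi \<bar>x\<bar>) \<in> borel_measurable borel" and "f \<in> borel_measurable M"
  shows "(\<lambda>p. phi \<bar>f p\<bar> :: real) \<in> borel_measurable M"
  using measurable_compose[OF assms(2) assms(1)] by simp

definition segment_kernel :: "(real \<Rightarrow> real) \<Rightarrow> real \<Rightarrow> real \<Rightarrow> real" where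
  "segment_kernel phi L u = L\<^sup>2 * phi (L * \<bar>u\<bar>) * min \<bar>u\<bar> 1"

lemma borel_measurable_segment_kernel:
  assumes "(\<lambda>x. phi \<bar>x\<bar>) \<in> borel_measurable borel" and "L > 0"
  shows "segment_kernel phi L \<in> borel_measurable borel"
proof -
  have "segment_kernel phi L = (\<lambda>u. L\<^sup>2 * phi \<bar>L * u\<bar> * min \<bar>u\<bar> 1)"
    using \<open>L > 0\<close> by (simp add: fun_eq_iff segment_kernel_def abs_mult)
  then show ?thesis
    using borel_measurable_abs_compose[OF assms(1), of "\<lambda>u. L * u"] by simp
qed

lemma emeasure_Ioo_leaving_shift:
  fixes a b h :: real
  assumes "a < b"
  shows "emeasure lborel {x \<in> {a<..<b}. x + h \<notin> {a<..<b}} = ennreal (min \<bar>h\<bar> (b - a))"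
proof (cases "h \<ge> 0")
  case True
  show ?thesis
  proof (cases "b - h \<le> a")
    case True
    with \<open>h \<ge> 0\<close> have "{x \<in> {a<..<b}. x + h \<notin> {a<..<b}} = {a<..<b}" by auto
    then show ?thesis using assms True \<open>h \<ge> 0\<close> by (simp add: min_def)
  next
    case False
    with \<open>h \<ge> 0\<close> have "{x \<in> {a<..<b}. x + h \<notin> {a<..<b}} = {b-h..<b}" by auto
    then show ?thesis using assms False \<open>h \<ge> 0\<close> by (simp add: min_def)
  qed
next
  case False
  show ?thesis
  proof (cases "a - h \<ge> b")
    case True
    with False have "{x \<in> {a<..<b}. x + h \<notin> {a<..<b}} = {a<..<b}" by auto
    then show ?thesis using assms True False by (simp add: min_def)
  next
    case False': False
    with False have "{x \<in> {a<..<b}. x + h \<notin> {a<..<b}} = {a<..a-h}" by auto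
    then show ?thesis using assms False False' by (simp add: min_def)
  qed
qed

lemma nl_perimeter_Ioo:
  fixes phi :: "real \<Rightarrow> real"
  assumes phi_meas: "(\<lambda>x. phi \<bar>x\<bar>) \<in> borel_measurable borel" and "a < b"
  shows "nl_perimeter phi {a<..<b} = (\<integral>\<^sup>+h. ennreal (phi \<bar>h\<bar>) * ennreal (min \<bar>h\<bar> (b - a)) \<partial>lborel)"
proof -
  let ?I = "{a<..<b}"
  let ?f = "\<lambda>x h. indicator ?I x * indicator (- ?I) (x + h) * ennreal (phi \<bar>h\<bar>)"
  have shift: "(\<integral>\<^sup>+y. indicator (- ?I) y * ennreal (phi \<bar>x - y\<bar>) \<partial>lborel)
      = (\<integral>\<^sup>+h. indicator (- ?I) (x + h) * ennreal (phi \<bar>h\<bar>) \<partial>lborel)" for x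
    using nn_integral_real_affine[where c=1 and t=x and f="\<lambda>y. indicator (- ?I) y * ennreal (phi \<bar>x - y\<bar>)"]
      borel_measurable_abs_compose[OF phi_meas, of "\<lambda>y. x - y"]
    by simp
  have "nl_perimeter phi ?I = (\<integral>\<^sup>+x. \<integral>\<^sup>+h. ?f x h \<partial>lborel \<partial>lborel)"
    unfolding nl_perimeter_def shift
  proof (intro nn_integral_cong)
    fix x :: real
    have "(\<lambda>h. indicator (- ?I) (x + h) * ennreal (phi \<bar>h\<bar>)) \<in> borel_measurable lborel"
      using phi_meas by measurable
    then show "indicator ?I x * (\<integral>\<^sup>+h. indicator (- ?I) (x + h) * ennreal (phi \<bar>h\<bar>) \<partial>lborel)
        = (\<integral>\<^sup>+h. ?f x h \<partial>lborel)"
      by (simp add: nn_integral_cmult mult.assoc)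
  qed
  also have "\<dots> = (\<integral>\<^sup>+h. \<integral>\<^sup>+x. ?f x h \<partial>lborel \<partial>lborel)"
    by (rule lborel_pair.Fubini'[symmetric])
      (use borel_measurable_abs_compose[OF phi_meas measurable_snd] in \<open>simp add: case_prod_unfold; measurable\<close>)
  also have "\<dots> = (\<integral>\<^sup>+h. ennreal (phi \<bar>h\<bar>) * ennreal (min \<bar>h\<bar> (b - a)) \<partial>lborel)"
  proof (intro nn_integral_cong)
    fix h :: real
    have "(\<lambda>x. indicator ?I x * indicator (- ?I) (x + h) :: ennreal)
        = indicator {x \<in> ?I. x + h \<notin> ?I}"
      by (auto simp: fun_eq_iff indicator_def)
    then have "(\<integral>\<^sup>+x. ?f x h \<partial>lborel) = emeasure lborel {x \<in> ?I. x + h \<notin> ?I} * ennreal (phi \<bar>h\<bar>)"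
      by (subst nn_integral_multc) auto
    then show "(\<integral>\<^sup>+x. ?f x h \<partial>lborel) = ennreal (phi \<bar>h\<bar>) * ennreal (min \<bar>h\<bar> (b - a))"
      using emeasure_Ioo_leaving_shift[OF \<open>a < b\<close>, of h] by (simp add: mult.commute)
  qed
  finally show ?thesis .
qed

lemma nl_perimeter_Ioo_rescaled:
  fixes phi :: "real \<Rightarrow> real"
  assumes phi_nonneg: "\<forall>t\<ge>0. phi t \<ge> 0"
    and phi_meas: "(\<lambda>x. phi \<bar>x\<bar>) \<in> borel_measurable borel" and "a < b"
  shows "nl_perimeter phi {a<..<b} = (\<integral>\<^sup>+u. segment_kernel phi (b - a) u \<partial>lborel)"
proof -
  define L where "L = b - a"
  have L: "L > 0" using \<open>a < b\<close> by (simp add: L_def)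
  have "nl_perimeter phi {a<..<b} = (\<integral>\<^sup>+h. ennreal (phi \<bar>h\<bar>) * ennreal (min \<bar>h\<bar> L) \<partial>lborel)"
    unfolding L_def by (rule nl_perimeter_Ioo[OF phi_meas \<open>a < b\<close>])
  also have "\<dots> = \<bar>L\<bar> * (\<integral>\<^sup>+u. ennreal (phi \<bar>0 + L * u\<bar>) * ennreal (min \<bar>0 + L * u\<bar> L) \<partial>lborel)"
    using L phi_meas by (intro nn_integral_real_affine) (simp_all, measurable)
  also have "\<dots> = (\<integral>\<^sup>+u. ennreal L * (ennreal (phi \<bar>L * u\<bar>) * ennreal (min \<bar>L * u\<bar> L)) \<partial>lborel)"
    using L borel_measurable_abs_compose[OF phi_meas, of "\<lambda>u. L * u"]
    by (subst nn_integral_cmult) (auto intro!: borel_measurable_times)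
  also have "\<dots> = (\<integral>\<^sup>+u. segment_kernel phi L u \<partial>lborel)"
    unfolding segment_kernel_def
  proof (intro nn_integral_cong)
    fix u :: real
    have "phi (L * \<bar>u\<bar>) \<ge> 0" using phi_nonneg L by simp
    moreover have "\<bar>L * u\<bar> = L * \<bar>u\<bar>" "min (L * \<bar>u\<bar>) L = L * min \<bar>u\<bar> 1"
      using L by (simp_all add: abs_mult min_mult_distrib_left)
    ultimately show "ennreal L * (ennreal (phi \<bar>L * u\<bar>) * ennreal (min \<bar>L * u\<bar> L))
        = ennreal (L\<^sup>2 * phi (L * \<bar>u\<bar>) * min \<bar>u\<bar> 1)"
      using L by (simp add: ennreal_mult[symmetric] power2_eq_square mult_ac)
  qed
  finally show ?thesis unfolding L_def .
qed

lemma nl_perimeter_cong_AE: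
  assumes "AE x in lborel. x \<in> S \<longleftrightarrow> x \<in> T"
  shows "nl_perimeter phi S = nl_perimeter phi T"
proof -
  have ind: "AE x in lborel. indicator S x = (indicator T x :: ennreal)"
    and ind_compl: "AE x in lborel. indicator (- S) x = (indicator (- T) x :: ennreal)"
    using assms by (auto simp: indicator_def)
  have "(\<integral>\<^sup>+y. indicator (- S) y * ennreal (phi \<bar>x - y\<bar>) \<partial>lborel)
      = (\<integral>\<^sup>+y. indicator (- T) y * ennreal (phi \<bar>x - y\<bar>) \<partial>lborel)" for x
    using ind_compl by (intro nn_integral_cong_AE) auto
  then show ?thesis
    unfolding nl_perimeter_def using ind by (intro nn_integral_cong_AE) auto
qed

lemma is_segment_AE_eq_Ioo:
  assumes "is_segment S"
  obtains a b where "a < b" and "measure lborel S = b - a"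
    and "AE x in lborel. x \<in> S \<longleftrightarrow> x \<in> {a<..<b}"
proof -
  obtain a b where "a < b" and S: "S = {a<..<b} \<or> S = {a..b} \<or> S = {a<..b} \<or> S = {a..<b}"
    using assms unfolding is_segment_def by blast
  moreover have "AE x in lborel. x \<noteq> a \<and> x \<noteq> b"
    using AE_lborel_singleton[of a] AE_lborel_singleton[of b] by eventually_elim auto
  then have "AE x in lborel. x \<in> S \<longleftrightarrow> x \<in> {a<..<b}"
    by eventually_elim (use S in auto)
  ultimately show thesis using that by auto
qed

lemma nl_perimeter_segment_rescaled:
  fixes phi :: "real \<Rightarrow> real"
  assumes "\<forall>t\<ge>0. phi t \<ge> 0" and "(\<lambda>x. phi \<bar>x\<bar>) \<in> borel_measurable borel" and "is_segment S"
  defines "L \<equiv> measure lborel S"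
  shows "L > 0"
    and "nl_perimeter phi S = (\<integral>\<^sup>+u. segment_kernel phi L u \<partial>lborel)"
proof -
  obtain a b where "a < b" and "L = b - a" and "AE x in lborel. x \<in> S \<longleftrightarrow> x \<in> {a<..<b}"
    using is_segment_AE_eq_Ioo[OF \<open>is_segment S\<close>] unfolding L_def by blast
  moreover from this have "nl_perimeter phi S = nl_perimeter phi {a<..<b}"
    by (intro nl_perimeter_cong_AE) simp
  ultimately show "L > 0"
    and "nl_perimeter phi S = (\<integral>\<^sup>+u. segment_kernel phi L u \<partial>lborel)"
    using nl_perimeter_cong_AE nl_perimeter_Ioo_rescaled[OF assms(1,2)] by simp_all
qed

lemma segment_kernel_growth:
  fixes phi :: "real \<Rightarrow> real"
  assumes phi_pos: "\<forall>t\<ge>0. phi t > 0"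
    and growth: "(INF t\<in>{0<..}. ereal ((R\<^sup>2 * phi (R * t) - r\<^sup>2 * phi (r * t)) / phi t)) \<ge> ereal d"
  shows "segment_kernel phi r u + segment_kernel phi 1 u * d \<le> segment_kernel phi R u"
proof -
  have "(r\<^sup>2 * phi (r * \<bar>u\<bar>) + phi \<bar>u\<bar> * d) * min \<bar>u\<bar> 1 \<le> R\<^sup>2 * phi (R * \<bar>u\<bar>) * min \<bar>u\<bar> 1"
  proof (cases "u = 0")
    case False
    then have "ereal d \<le> ereal ((R\<^sup>2 * phi (R * \<bar>u\<bar>) - r\<^sup>2 * phi (r * \<bar>u\<bar>)) / phi \<bar>u\<bar>)"
      using growth by (meson INF_lower greaterThan_iff order_trans zero_less_abs_iff)
    then have "phi \<bar>u\<bar> * d \<le> R\<^sup>2 * phi (R * \<bar>u\<bar>) - r\<^sup>2 * phi (r * \<bar>u\<bar>)"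
      using phi_pos by (simp add: pos_le_divide_eq mult.commute)
    then show ?thesis by (intro mult_right_mono) simp_all
  qed simp
  then show ?thesis by (simp add: segment_kernel_def algebra_simps)
qed

theorem mainTheorem8:
  fixes phi psi :: "real \<Rightarrow> real" and A B :: "real set"
  assumes phi_pos: "\<forall>t\<ge>0. phi t > 0"
    and phi_meas: "(\<lambda>x. phi \<bar>x\<bar>) \<in> borel_measurable borel"
    and phi_int: "(\<integral>\<^sup>+ x. ennreal (min 1 \<bar>x\<bar> * phi \<bar>x\<bar>) \<partial>lborel) < \<infinity>"
    and psi_nonneg: "\<forall>t\<ge>0. psi t \<ge> 0"
    and psi_mono: "mono_on {0..} psi"
    and psi_cond: "\<forall>R r. 0 \<le> r \<and> r \<le> R \<longrightarrow>
        (INF t\<in>{0<..}. ereal ((R\<^sup>2 * phi (R * t) - r\<^sup>2 * phi (r * t)) / phi t))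
          \<ge> ereal (psi R - psi r)"
    and A_seg: "is_segment A" and B_seg: "is_segment B"
    and AB: "measure lborel A \<le> measure lborel B"
  shows "nl_perimeter phi A
           + nl_perimeter phi {0<..<1} * ennreal (psi (measure lborel B) - psi (measure lborel A))
         \<le> nl_perimeter phi B"
proof -
  define r R where "r = measure lborel A" and "R = measure lborel B"
  define D where "D = psi R - psi r"
  let ?G = "segment_kernel phi"
  have phi_nonneg: "\<forall>t\<ge>0. phi t \<ge> 0" using phi_pos by (simp add: less_imp_le)
  have "r > 0" and PA: "nl_perimeter phi A = (\<integral>\<^sup>+u. ?G r u \<partial>lborel)"
    and PB: "nl_perimeter phi B = (\<integral>\<^sup>+u. ?G R u \<partial>lborel)"
    using nl_perimeter_segment_rescaled[OF phi_nonneg phi_meas] A_seg B_seg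
    unfolding r_def R_def by blast+
  have P1: "nl_perimeter phi {0<..<1} = (\<integral>\<^sup>+u. ?G 1 u \<partial>lborel)"
    using nl_perimeter_Ioo_rescaled[OF phi_nonneg phi_meas, of 0 1] by simp
  have "r \<le> R" using AB by (simp add: r_def R_def)
  then have "D \<ge> 0" using psi_mono \<open>r > 0\<close> by (simp add: D_def mono_on_def)
  have "nl_perimeter phi A + nl_perimeter phi {0<..<1} * ennreal D
      = (\<integral>\<^sup>+u. ennreal (?G r u) + ennreal (?G 1 u) * ennreal D \<partial>lborel)"
    unfolding PA P1 using borel_measurable_segment_kernel[OF phi_meas] \<open>r > 0\<close>
    by (simp add: nn_integral_add nn_integral_multc)
  also have "\<dots> \<le> (\<integral>\<^sup>+u. ?G R u \<partial>lborel)"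
  proof (intro nn_integral_mono)
    fix u
    have "?G r u \<ge> 0" "?G 1 u \<ge> 0"
      using phi_nonneg \<open>r > 0\<close> by (simp_all add: segment_kernel_def)
    moreover have "?G r u + ?G 1 u * D \<le> ?G R u"
      using psi_cond \<open>r > 0\<close> \<open>r \<le> R\<close> by (intro segment_kernel_growth[OF phi_pos]) (simp add: D_def)
    ultimately show "ennreal (?G r u) + ennreal (?G 1 u) * ennreal D \<le> ennreal (?G R u)"
      using \<open>D \<ge> 0\<close> by (simp add: ennreal_mult'[symmetric] ennreal_plus[symmetric] ennreal_leI del: ennreal_plus)
  qed
  finally show ?thesis unfolding PB D_def r_def R_def .
qed

end
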